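(* Let $L$ be a pentagonal linkage with positive charges $q_1,\dots,q_5>0$ at the vertices and effective Coulomb potential $E=\frac{q_2q_5}{b_1}+\frac{q_1q_3}{b_2}+\frac{q_2q_4}{b_3}+\frac{q_3q_5}{b_4}+\frac{q_1q_4}{b_5}$. Let $X_k=\{P\in\overline{M^C}(L): b_4=k\}$ be a slice, parameterized on its relative interior by $x_2$. Then $\frac{d^2}{dx_2^2}\big(E|_{X_k}\big)>0$ on the relative interior of $X_k$.
   Context: A pentagonal linkage $L$ is given by side lengths $a_1,\dots,a_5>0$; $M(L)$ is the set of planar 5-gons $(A_1,\dots,A_5)$ with $|A_iA_{i+1}|=a_i$ (indices mod 5) modulo all isometries of $\mathbb{R}^2$; $M^C(L)$ is the set of strictly convex configurations (convex pentagon $A_1\dots A_5$ in this cyclic order, no angle equal to $\pi$) and $\overline{M^C}(L)$ its closure. $b_i=|A_{i-1}A_{i+1}|$, $x_i=b_i^2$ (indices mod 5). *)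

theory Defs
  imports "HOL-Analysis.Analysis"
begin

text \<open>A planar pentagon is a point of complex^5 (the plane is identified with the
complex numbers); index type 5 gives arithmetic mod 5, and the paper's vertex
A_i is A $ i, so A $ 5 = A $ 0.  Side lengths and charges are functions 5 => real.
All quantities below are invariant under isometries, so configurations are
handled by representatives rather than isometry classes.\<close>

type_synonym pentagon = "complex ^ 5"

definition cross :: "complex \<Rightarrow> complex \<Rightarrow> real" where
  "cross z w = Im (cnj z * w)"

definition has_sides :: "(5 \<Rightarrow> real) \<Rightarrow> pentagon \<Rightarrow> bool" where
  "has_sides a A \<longleftrightarrow> (\<forall>i::5. dist (A $ i) (A $ (i + 1)) = a i)"

definition strictly_convex :: "pentagon \<Rightarrow> bool" where
  "strictly_convex A \<longleftrightarrow>
     (\<forall>i j::5. j \<noteq> i \<and> j \<noteq> i + 1 \<longrightarrow> cross (A $ (i + 1) - A $ i) (A $ j - A $ i) > 0)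
   \<or> (\<forall>i j::5. j \<noteq> i \<and> j \<noteq> i + 1 \<longrightarrow> cross (A $ (i + 1) - A $ i) (A $ j - A $ i) < 0)"

definition MC :: "(5 \<Rightarrow> real) \<Rightarrow> pentagon set" where
  "MC a = {A. has_sides a A \<and> strictly_convex A}"

definition MC_closure :: "(5 \<Rightarrow> real) \<Rightarrow> pentagon set" where
  "MC_closure a = closure (MC a)"

definition diag :: "pentagon \<Rightarrow> 5 \<Rightarrow> real" where
  "diag A i = dist (A $ (i - 1)) (A $ (i + 1))"

definition xdiag :: "pentagon \<Rightarrow> 5 \<Rightarrow> real" where
  "xdiag A i = (diag A i)\<^sup>2"

definition energy :: "(5 \<Rightarrow> real) \<Rightarrow> pentagon \<Rightarrow> real" where
  "energy q A =
     q 2 * q 5 / diag A 1 + q 1 * q 3 / diag A 2 + q 2 * q 4 / diag A 3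
   + q 3 * q 5 / diag A 4 + q 1 * q 4 / diag A 5"

definition slice :: "(5 \<Rightarrow> real) \<Rightarrow> real \<Rightarrow> pentagon set" where
  "slice a k = {A \<in> MC_closure a. diag A 4 = k}"

definition slice_energy :: "(5 \<Rightarrow> real) \<Rightarrow> (5 \<Rightarrow> real) \<Rightarrow> real \<Rightarrow> real \<Rightarrow> real" where
  "slice_energy a q k t = energy q (SOME A. A \<in> slice a k \<and> xdiag A 2 = t)"

definition slice_param_interior :: "(5 \<Rightarrow> real) \<Rightarrow> real \<Rightarrow> real set" where
  "slice_param_interior a k = interior ((\<lambda>A. xdiag A 2) ` slice a k)"

end

theory Submission
  imports Defs
begin

text \<open>Fix b_4 = k and put t = x_2.  Placing A_3 at the origin, the triangles A_1 A_3 A_5,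
A_1 A_2 A_3 and A_3 A_4 A_5 are determined by their side lengths, and convexity fixes their
orientations; hence x_1, x_3 and x_5 are explicit functions of t, and
E = q_2 q_5 x_1^(-1/2) + q_1 q_3 t^(-1/2) + q_2 q_4 x_3^(-1/2) + q_3 q_5 / k + q_1 q_4 x_5^(-1/2).
The second derivative of c X^(-1/2) is c (3 X'^2 / (4 X^(5/2)) - X'' / (2 X^(3/2))), which is
nonnegative when X is concave, while c t^(-1/2) is strictly convex.  So it suffices that x_1, x_3
and x_5 are concave in t.  For x_5 this is the concavity of the area of A_1 A_3 A_5 in t.  For x_1
and x_3 one writes them through the product of the complex numbers describing the triangles
A_1 A_3 A_5 and A_1 A_2 A_3, which rotates at a rate g(t); concavity then reduces to
g' J - g^2 R >= 0 for the real and imaginary parts R, J of that product, and this quantity is a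
sum of two squares.\<close>

section \<open>Triangles with a varying side\<close>

text \<open>For a triangle with sides x, y and sqrt t, let theta be the angle between the sides x and
sqrt t.  Then tri_dot = 2 x sqrt t cos theta and tri_cross = 2 x sqrt t sin theta, so that
tri_gram = 16 area^2 (Heron's formula) is symmetric in x and y, and tri_dot / tri_cross = cot theta.\<close>

definition tri_dot :: "real \<Rightarrow> real \<Rightarrow> real \<Rightarrow> real" where
  "tri_dot x y t = x\<^sup>2 + t - y\<^sup>2"

definition tri_gram :: "real \<Rightarrow> real \<Rightarrow> real \<Rightarrow> real" where
  "tri_gram x y t = 4 * x\<^sup>2 * t - (tri_dot x y t)\<^sup>2"

definition tri_cross :: "real \<Rightarrow> real \<Rightarrow> real \<Rightarrow> real" where
  "tri_cross x y t = sqrt (tri_gram x y t)"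

lemma tri_gram_sym: "tri_gram x y t = tri_gram y x t"
  unfolding tri_gram_def tri_dot_def by (simp add: algebra_simps power2_eq_square)

lemma tri_cross_sym: "tri_cross x y t = tri_cross y x t"
  unfolding tri_cross_def using tri_gram_sym[of x y t] by simp

lemma tri_cross_sq: "tri_gram x y t > 0 \<Longrightarrow> (tri_cross x y t)\<^sup>2 = tri_gram x y t"
  unfolding tri_cross_def by simp

lemma tri_cross_pos: "tri_gram x y t > 0 \<Longrightarrow> tri_cross x y t > 0"
  unfolding tri_cross_def by simp

lemma pos_of_tri_gram_pos: "tri_gram x y t > 0 \<Longrightarrow> t > 0"
proof -
  assume "tri_gram x y t > 0"
  then have "x\<^sup>2 * t > 0"
    unfolding tri_gram_def using zero_le_power2[of "tri_dot x y t"] by linarith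
  then show ?thesis by (simp add: zero_less_mult_iff)
qed

lemma has_real_derivative_tri_dot: "(tri_dot x y has_real_derivative 1) (at t)"
  unfolding tri_dot_def by (auto intro!: derivative_eq_intros)

lemma has_real_derivative_tri_gram: "(tri_gram x y has_real_derivative 2 * (x\<^sup>2 + y\<^sup>2 - t)) (at t)"
proof -
  have "(tri_gram x y has_real_derivative 4 * x\<^sup>2 - 2 * tri_dot x y t * 1) (at t)"
    unfolding tri_gram_def tri_dot_def by (auto intro!: derivative_eq_intros)
  then show ?thesis by (simp add: tri_dot_def algebra_simps)
qed

lemma has_real_derivative_tri_cross:
  assumes "tri_gram x y t > 0"
  shows "(tri_cross x y has_real_derivative (x\<^sup>2 + y\<^sup>2 - t) / tri_cross x y t) (at t)"
proof -
  have "((\<lambda>t. sqrt (tri_gram x y t)) has_real_derivative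
      inverse (sqrt (tri_gram x y t)) / 2 * (2 * (x\<^sup>2 + y\<^sup>2 - t))) (at t)"
    by (rule DERIV_chain2[OF DERIV_real_sqrt[OF assms] has_real_derivative_tri_gram])
  then show ?thesis
    unfolding tri_cross_def[abs_def]
    by (rule DERIV_cong) (use assms in \<open>simp add: tri_cross_def field_simps\<close>)
qed

lemma tri_cross_slope_has_nonpos_deriv:
  assumes "tri_gram x y t > 0"
  shows "\<exists>d \<le> 0. ((\<lambda>t. (x\<^sup>2 + y\<^sup>2 - t) / tri_cross x y t) has_real_derivative d) (at t)"
proof -
  define c where "c = tri_cross x y t"
  have c: "c > 0" unfolding c_def using tri_cross_pos[OF assms] .
  have deriv: "((\<lambda>t. (x\<^sup>2 + y\<^sup>2 - t) / tri_cross x y t) has_real_derivative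
      (- 1 * c - (x\<^sup>2 + y\<^sup>2 - t) * ((x\<^sup>2 + y\<^sup>2 - t) / c)) / (c * c)) (at t)"
    unfolding c_def
    by (intro DERIV_divide has_real_derivative_tri_cross assms derivative_eq_intros)
       (use c c_def in auto)
  have "(x\<^sup>2 + y\<^sup>2 - t) * ((x\<^sup>2 + y\<^sup>2 - t) / c) \<ge> 0"
    using c by simp
  then have "- 1 * c - (x\<^sup>2 + y\<^sup>2 - t) * ((x\<^sup>2 + y\<^sup>2 - t) / c) \<le> 0"
    using c by linarith
  then have "(- 1 * c - (x\<^sup>2 + y\<^sup>2 - t) * ((x\<^sup>2 + y\<^sup>2 - t) / c)) / (c * c) \<le> 0"
    using c by (simp add: divide_nonpos_pos)
  with deriv show ?thesis by blast
qed

lemma has_real_derivative_tri_cot: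
  assumes "tri_gram x y t > 0"
  shows "((\<lambda>t. tri_dot x y t / tri_cross x y t) has_real_derivative
           2 * x\<^sup>2 * tri_dot y x t / (tri_cross x y t)^3) (at t)"
proof -
  define c where "c = tri_cross x y t"
  have c: "c > 0" unfolding c_def using tri_cross_pos[OF assms] .
  have "((\<lambda>t. tri_dot x y t / tri_cross x y t) has_real_derivative
      (1 * c - tri_dot x y t * ((x\<^sup>2 + y\<^sup>2 - t) / c)) / (c * c)) (at t)"
    unfolding c_def
    by (rule DERIV_divide[OF has_real_derivative_tri_dot has_real_derivative_tri_cross[OF assms]])
       (use c c_def in simp)
  moreover have "(1 * c - tri_dot x y t * ((x\<^sup>2 + y\<^sup>2 - t) / c)) / (c * c)
      = (c\<^sup>2 - tri_dot x y t * (x\<^sup>2 + y\<^sup>2 - t)) / c^3"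
    using c by (simp add: field_simps power2_eq_square power3_eq_cube)
  moreover have "c\<^sup>2 - tri_dot x y t * (x\<^sup>2 + y\<^sup>2 - t) = 2 * x\<^sup>2 * tri_dot y x t"
    unfolding c_def tri_cross_sq[OF assms] tri_gram_def tri_dot_def
    by (simp add: algebra_simps power2_eq_square)
  ultimately show ?thesis unfolding c_def by simp
qed

lemma tri_cot_deriv_eq:
  assumes "t > 0" and "c > 0" and "c\<^sup>2 = tri_gram x y t"
  shows "2 * x\<^sup>2 * tri_dot y x t / c^3 = (1 + (tri_dot x y t / c)\<^sup>2) * (tri_dot y x t / c) / (2 * t)"
proof -
  have "1 + (tri_dot x y t / c)\<^sup>2 = 4 * x\<^sup>2 * t / c\<^sup>2"
    using assms(2,3) unfolding tri_gram_def by (simp add: field_simps)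
  then show ?thesis using assms(1,2) by (simp add: field_simps power2_eq_square power3_eq_cube)
qed

lemma tri_prod_re_deriv_eq:
  fixes a b t x1 y1 x2 y2 :: real
  assumes t: "t > 0" and a: "a > 0" and b: "b > 0"
    and ea: "a\<^sup>2 = tri_gram y1 x1 t" and eb: "b\<^sup>2 = tri_gram y2 x2 t"
  shows "tri_dot x1 y1 t + tri_dot x2 y2 t
           - (a * ((y2\<^sup>2 + x2\<^sup>2 - t) / b) + (y1\<^sup>2 + x1\<^sup>2 - t) / a * b)
       = (tri_dot x1 y1 t * tri_dot x2 y2 t - a * b) / t
         + ((tri_dot y1 x1 t / a + tri_dot y2 x2 t / b) / (2 * t))
           * (tri_dot x1 y1 t * b + tri_dot x2 y2 t * a)"
proof -
  have l: "(tri_dot x1 y1 t + tri_dot x2 y2 t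
        - (a * ((y2\<^sup>2 + x2\<^sup>2 - t) / b) + (y1\<^sup>2 + x1\<^sup>2 - t) / a * b)) * (2 * t * a * b)
      = 2 * t * (tri_dot x2 y2 t + tri_dot x1 y1 t) * a * b
        - 2 * t * (y1\<^sup>2 + x1\<^sup>2 - t) * b\<^sup>2 - 2 * t * (y2\<^sup>2 + x2\<^sup>2 - t) * a\<^sup>2"
    using t a b by (simp add: field_simps power2_eq_square)
  have r: "((tri_dot x1 y1 t * tri_dot x2 y2 t - a * b) / t
        + ((tri_dot y1 x1 t / a + tri_dot y2 x2 t / b) / (2 * t))
          * (tri_dot x1 y1 t * b + tri_dot x2 y2 t * a)) * (2 * t * a * b)
      = 2 * (tri_dot x1 y1 t * tri_dot x2 y2 t - a * b) * a * b
        + (tri_dot y1 x1 t * b + tri_dot y2 x2 t * a) * (tri_dot x1 y1 t * b + tri_dot x2 y2 t * a)"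
    using t a b by (simp add: field_simps power2_eq_square)
  have "2 * t * (tri_dot x2 y2 t + tri_dot x1 y1 t) * a * b
        - 2 * t * (y1\<^sup>2 + x1\<^sup>2 - t) * b\<^sup>2 - 2 * t * (y2\<^sup>2 + x2\<^sup>2 - t) * a\<^sup>2
      = 2 * (tri_dot x1 y1 t * tri_dot x2 y2 t - a * b) * a * b
        + (tri_dot y1 x1 t * b + tri_dot y2 x2 t * a) * (tri_dot x1 y1 t * b + tri_dot x2 y2 t * a)"
    using ea eb unfolding tri_gram_def tri_dot_def by algebra
  with l r have "(tri_dot x1 y1 t + tri_dot x2 y2 t
        - (a * ((y2\<^sup>2 + x2\<^sup>2 - t) / b) + (y1\<^sup>2 + x1\<^sup>2 - t) / a * b)) * (2 * t * a * b)
      = ((tri_dot x1 y1 t * tri_dot x2 y2 t - a * b) / t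
        + ((tri_dot y1 x1 t / a + tri_dot y2 x2 t / b) / (2 * t))
          * (tri_dot x1 y1 t * b + tri_dot x2 y2 t * a)) * (2 * t * a * b)"
    by simp
  then show ?thesis using t a b by simp
qed

lemma tri_prod_im_deriv_eq:
  fixes a b t x1 y1 x2 y2 :: real
  assumes t: "t > 0" and a: "a > 0" and b: "b > 0"
    and ea: "a\<^sup>2 = tri_gram y1 x1 t" and eb: "b\<^sup>2 = tri_gram y2 x2 t"
  shows "tri_dot x1 y1 t * ((y2\<^sup>2 + x2\<^sup>2 - t) / b) + b
           + (tri_dot x2 y2 t * ((y1\<^sup>2 + x1\<^sup>2 - t) / a) + a)
       = (tri_dot x1 y1 t * b + tri_dot x2 y2 t * a) / t
         - ((tri_dot y1 x1 t / a + tri_dot y2 x2 t / b) / (2 * t))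
           * (tri_dot x1 y1 t * tri_dot x2 y2 t - a * b)"
proof -
  have l: "(tri_dot x1 y1 t * ((y2\<^sup>2 + x2\<^sup>2 - t) / b) + b
        + (tri_dot x2 y2 t * ((y1\<^sup>2 + x1\<^sup>2 - t) / a) + a)) * (2 * t * a * b)
      = 2 * t * a * b\<^sup>2 + 2 * t * tri_dot x1 y1 t * (y2\<^sup>2 + x2\<^sup>2 - t) * a
        + 2 * t * a\<^sup>2 * b + 2 * t * tri_dot x2 y2 t * (y1\<^sup>2 + x1\<^sup>2 - t) * b"
    using t a b by (simp add: field_simps power2_eq_square)
  have r: "((tri_dot x1 y1 t * b + tri_dot x2 y2 t * a) / t
        - ((tri_dot y1 x1 t / a + tri_dot y2 x2 t / b) / (2 * t))
          * (tri_dot x1 y1 t * tri_dot x2 y2 t - a * b)) * (2 * t * a * b)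
      = 2 * (tri_dot x1 y1 t * b + tri_dot x2 y2 t * a) * a * b
        - (tri_dot y1 x1 t * b + tri_dot y2 x2 t * a) * (tri_dot x1 y1 t * tri_dot x2 y2 t - a * b)"
    using t a b by (simp add: field_simps power2_eq_square)
  have "2 * t * a * b\<^sup>2 + 2 * t * tri_dot x1 y1 t * (y2\<^sup>2 + x2\<^sup>2 - t) * a
        + 2 * t * a\<^sup>2 * b + 2 * t * tri_dot x2 y2 t * (y1\<^sup>2 + x1\<^sup>2 - t) * b
      = 2 * (tri_dot x1 y1 t * b + tri_dot x2 y2 t * a) * a * b
        - (tri_dot y1 x1 t * b + tri_dot y2 x2 t * a) * (tri_dot x1 y1 t * tri_dot x2 y2 t - a * b)"
    using ea eb unfolding tri_gram_def tri_dot_def by algebra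
  with l r have "(tri_dot x1 y1 t * ((y2\<^sup>2 + x2\<^sup>2 - t) / b) + b
        + (tri_dot x2 y2 t * ((y1\<^sup>2 + x1\<^sup>2 - t) / a) + a)) * (2 * t * a * b)
      = ((tri_dot x1 y1 t * b + tri_dot x2 y2 t * a) / t
        - ((tri_dot y1 x1 t / a + tri_dot y2 x2 t / b) / (2 * t))
          * (tri_dot x1 y1 t * tri_dot x2 y2 t - a * b)) * (2 * t * a * b)"
    by simp
  then show ?thesis using t a b by simp
qed

lemma rate_ineq_identity:
  fixes u v p r a b t :: real
  assumes "t > 0"
  shows "(((1 + u\<^sup>2) * r + (1 + v\<^sup>2) * p) / (4 * t\<^sup>2) - (u + v) / (2 * t\<^sup>2)) * (a * b * (r + p))
           - ((u + v) / (2 * t))\<^sup>2 * (a * b * (r * p - 1))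
       = a * b * ((p + r - u - v)\<^sup>2 + (p * v - r * u)\<^sup>2) / (4 * t\<^sup>2)"
proof -
  have "(((1 + u\<^sup>2) * r + (1 + v\<^sup>2) * p) / (4 * t\<^sup>2) - (u + v) / (2 * t\<^sup>2)) * (a * b * (r + p))
          - ((u + v) / (2 * t))\<^sup>2 * (a * b * (r * p - 1))
      = a * b * ((((1 + u\<^sup>2) * r + (1 + v\<^sup>2) * p) - 2 * (u + v)) * (r + p)
          - (u + v)\<^sup>2 * (r * p - 1)) / (4 * t\<^sup>2)"
    using assms by (simp add: field_simps power2_eq_square)
  also have "(((1 + u\<^sup>2) * r + (1 + v\<^sup>2) * p) - 2 * (u + v)) * (r + p) - (u + v)\<^sup>2 * (r * p - 1)
      = (p + r - u - v)\<^sup>2 + (p * v - r * u)\<^sup>2"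
    by algebra
  finally show ?thesis .
qed

lemma rotated_combination_nonneg:
  fixes \<alpha> \<beta> R J c1 c2 :: real
  assumes "\<alpha> \<ge> 0" and "\<beta> * J - \<alpha> * R \<ge> 0" and "J \<ge> 0" and "J = 0 \<Longrightarrow> R < 0"
    and "c2 \<ge> 0" and "c1 * J + c2 * R \<ge> 0" and "c2 = 0 \<Longrightarrow> c1 \<ge> 0"
  shows "\<beta> * (c1 * J + c2 * R) - \<alpha> * (c1 * R - c2 * J) \<ge> 0"
proof (cases "J = 0")
  case True
  then have R: "R < 0" using assms(4) by blast
  from True assms(6) have "c2 * R \<ge> 0" by simp
  with R assms(5) have "c2 = 0" by (smt (verit) mult_pos_neg)
  with assms(7) have "c1 \<ge> 0" by simp
  with R assms(1) have "\<alpha> * c1 * R \<le> 0" by (simp add: mult_nonneg_nonpos)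
  then show ?thesis using True \<open>c2 = 0\<close> by (simp add: algebra_simps)
next
  case False
  with assms(3) have J: "J > 0" by simp
  have "J * (\<beta> * (c1 * J + c2 * R) - \<alpha> * (c1 * R - c2 * J))
      = (c1 * J + c2 * R) * (\<beta> * J - \<alpha> * R) + \<alpha> * c2 * (R\<^sup>2 + J\<^sup>2)"
    by (simp add: algebra_simps power2_eq_square)
  also have "\<dots> \<ge> 0"
  proof -
    have "(c1 * J + c2 * R) * (\<beta> * J - \<alpha> * R) \<ge> 0" using assms(2,6) by simp
    moreover have "\<alpha> * c2 * (R\<^sup>2 + J\<^sup>2) \<ge> 0" using assms(1,5) by simp
    ultimately show ?thesis by simp
  qed
  finally show ?thesis using J by (simp add: zero_le_mult_iff)
qed

section \<open>Two triangles sharing a side\<close>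

text \<open>Two triangles with common side sqrt t: A1 A3 A5 with sides a5, k and A1 A2 A3 with sides a1, a2.
tri_prod_re + i tri_prod_im is the product of the complex numbers tri_dot + i tri_cross of the
two triangles, and rot_re + i rot_im is (c1 + i c2) times this product, divided by t.  Up to
the factor 1/t, these complex numbers rotate with angular speed tri_rate as t varies.\<close>

context
  fixes a5 k a1 a2 :: real
begin

definition tri_prod_re :: "real \<Rightarrow> real" where
  "tri_prod_re t = tri_dot k a5 t * tri_dot a2 a1 t - tri_cross a5 k t * tri_cross a1 a2 t"

definition tri_prod_im :: "real \<Rightarrow> real" where
  "tri_prod_im t = tri_dot k a5 t * tri_cross a1 a2 t + tri_dot a2 a1 t * tri_cross a5 k t"

definition tri_rate :: "real \<Rightarrow> real" where
  "tri_rate t = (tri_dot a5 k t / tri_cross a5 k t + tri_dot a1 a2 t / tri_cross a1 a2 t) / (2 * t)"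

definition tri_rate_deriv :: "real \<Rightarrow> real" where
  "tri_rate_deriv t =
     (2 * a5\<^sup>2 * tri_dot k a5 t / (tri_cross a5 k t)^3 + 2 * a1\<^sup>2 * tri_dot a2 a1 t / (tri_cross a1 a2 t)^3) / (2 * t)
     - (tri_dot a5 k t / tri_cross a5 k t + tri_dot a1 a2 t / tri_cross a1 a2 t) / (2 * t\<^sup>2)"

definition rot_re :: "real \<Rightarrow> real \<Rightarrow> real \<Rightarrow> real" where
  "rot_re c1 c2 t = (c1 * tri_prod_re t - c2 * tri_prod_im t) / t"

definition rot_im :: "real \<Rightarrow> real \<Rightarrow> real \<Rightarrow> real" where
  "rot_im c1 c2 t = (c1 * tri_prod_im t + c2 * tri_prod_re t) / t"

context
  fixes t :: real
  assumes t: "t > 0" and gram1: "tri_gram a5 k t > 0" and gram2: "tri_gram a1 a2 t > 0"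
begin

lemma has_real_derivative_tri_prod_re:
  "(tri_prod_re has_real_derivative tri_prod_re t / t + tri_rate t * tri_prod_im t) (at t)"
proof -
  have "(tri_prod_re has_real_derivative tri_dot k a5 t * 1 + 1 * tri_dot a2 a1 t
       - (tri_cross a5 k t * ((a1\<^sup>2 + a2\<^sup>2 - t) / tri_cross a1 a2 t)
          + (a5\<^sup>2 + k\<^sup>2 - t) / tri_cross a5 k t * tri_cross a1 a2 t)) (at t)"
    unfolding tri_prod_re_def[abs_def]
    by (intro DERIV_diff DERIV_mult' has_real_derivative_tri_dot has_real_derivative_tri_cross
        gram1 gram2)
  then show ?thesis
    unfolding tri_prod_re_def tri_prod_im_def tri_rate_def mult_1_left mult_1_right
    by (rule DERIV_cong, intro tri_prod_re_deriv_eq t tri_cross_pos gram1 gram2 tri_cross_sq)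
qed

lemma has_real_derivative_tri_prod_im:
  "(tri_prod_im has_real_derivative tri_prod_im t / t - tri_rate t * tri_prod_re t) (at t)"
proof -
  have "(tri_prod_im has_real_derivative tri_dot k a5 t * ((a1\<^sup>2 + a2\<^sup>2 - t) / tri_cross a1 a2 t)
       + 1 * tri_cross a1 a2 t
       + (tri_dot a2 a1 t * ((a5\<^sup>2 + k\<^sup>2 - t) / tri_cross a5 k t) + 1 * tri_cross a5 k t)) (at t)"
    unfolding tri_prod_im_def[abs_def]
    by (intro DERIV_add DERIV_mult' has_real_derivative_tri_dot has_real_derivative_tri_cross
        gram1 gram2)
  then show ?thesis
    unfolding tri_prod_re_def tri_prod_im_def tri_rate_def mult_1_left mult_1_right
    by (rule DERIV_cong, intro tri_prod_im_deriv_eq t tri_cross_pos gram1 gram2 tri_cross_sq)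
qed

lemma has_real_derivative_rot_re: "(rot_re c1 c2 has_real_derivative tri_rate t * rot_im c1 c2 t) (at t)"
proof -
  have "((\<lambda>t. (c1 * tri_prod_re t - c2 * tri_prod_im t) / t) has_real_derivative
      ((c1 * (tri_prod_re t / t + tri_rate t * tri_prod_im t)
        - c2 * (tri_prod_im t / t - tri_rate t * tri_prod_re t)) * t
       - (c1 * tri_prod_re t - c2 * tri_prod_im t) * 1) / (t * t)) (at t)"
    by (intro DERIV_divide DERIV_diff DERIV_cmult has_real_derivative_tri_prod_re
        has_real_derivative_tri_prod_im DERIV_ident) (use t in auto)
  then show ?thesis
    unfolding rot_re_def[abs_def] by (rule DERIV_cong) (use t in \<open>simp add: rot_im_def field_simps\<close>)
qed

lemma has_real_derivative_rot_im: "(rot_im c1 c2 has_real_derivative - (tri_rate t * rot_re c1 c2 t)) (at t)"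
proof -
  have "((\<lambda>t. (c1 * tri_prod_im t + c2 * tri_prod_re t) / t) has_real_derivative
      ((c1 * (tri_prod_im t / t - tri_rate t * tri_prod_re t)
        + c2 * (tri_prod_re t / t + tri_rate t * tri_prod_im t)) * t
       - (c1 * tri_prod_im t + c2 * tri_prod_re t) * 1) / (t * t)) (at t)"
    by (intro DERIV_divide DERIV_add DERIV_cmult has_real_derivative_tri_prod_re
        has_real_derivative_tri_prod_im DERIV_ident) (use t in auto)
  then show ?thesis
    unfolding rot_im_def[abs_def] by (rule DERIV_cong) (use t in \<open>simp add: rot_re_def field_simps\<close>)
qed

lemma has_real_derivative_tri_rate: "(tri_rate has_real_derivative tri_rate_deriv t) (at t)"
proof -
  have "((\<lambda>t. (tri_dot a5 k t / tri_cross a5 k t + tri_dot a1 a2 t / tri_cross a1 a2 t) / (2 * t))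
      has_real_derivative
        ((2 * a5\<^sup>2 * tri_dot k a5 t / (tri_cross a5 k t)^3 + 2 * a1\<^sup>2 * tri_dot a2 a1 t / (tri_cross a1 a2 t)^3) * (2 * t)
         - (tri_dot a5 k t / tri_cross a5 k t + tri_dot a1 a2 t / tri_cross a1 a2 t) * 2)
        / ((2 * t) * (2 * t))) (at t)"
    by (intro DERIV_divide DERIV_add has_real_derivative_tri_cot gram1 gram2 DERIV_cmult_right
        DERIV_ident derivative_eq_intros) (use t in auto)
  then show ?thesis
    unfolding tri_rate_def[abs_def]
    by (rule DERIV_cong) (use t in \<open>simp add: tri_rate_deriv_def field_simps power2_eq_square\<close>)
qed

text \<open>With the cotangents u, v, r, p of the four angles involved, the left-hand side is a sum of
two squares (rate_ineq_identity).\<close>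

lemma tri_rate_deriv_ineq: "tri_rate_deriv t * tri_prod_im t - (tri_rate t)\<^sup>2 * tri_prod_re t \<ge> 0"
proof -
  define a where "a = tri_cross a5 k t"
  define b where "b = tri_cross a1 a2 t"
  have a: "a > 0" and b: "b > 0"
    using tri_cross_pos gram1 gram2 unfolding a_def b_def by auto
  have ea: "a\<^sup>2 = tri_gram a5 k t" and eb: "b\<^sup>2 = tri_gram a1 a2 t"
    using tri_cross_sq gram1 gram2 unfolding a_def b_def by auto
  have rate_deriv: "tri_rate_deriv t =
      ((1 + (tri_dot a5 k t / a)\<^sup>2) * (tri_dot k a5 t / a) + (1 + (tri_dot a1 a2 t / b)\<^sup>2) * (tri_dot a2 a1 t / b))
        / (4 * t\<^sup>2)
      - (tri_dot a5 k t / a + tri_dot a1 a2 t / b) / (2 * t\<^sup>2)"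
    unfolding tri_rate_deriv_def a_def[symmetric] b_def[symmetric]
      tri_cot_deriv_eq[OF t a ea] tri_cot_deriv_eq[OF t b eb]
    using t a b by (simp add: field_simps power2_eq_square)
  have im: "tri_prod_im t = a * b * (tri_dot k a5 t / a + tri_dot a2 a1 t / b)"
    unfolding tri_prod_im_def a_def[symmetric] b_def[symmetric] using a b by (simp add: field_simps)
  have re: "tri_prod_re t = a * b * (tri_dot k a5 t / a * (tri_dot a2 a1 t / b) - 1)"
    unfolding tri_prod_re_def a_def[symmetric] b_def[symmetric] using a b by (simp add: field_simps)
  have rate: "tri_rate t = (tri_dot a5 k t / a + tri_dot a1 a2 t / b) / (2 * t)"
    unfolding tri_rate_def a_def b_def ..
  have "tri_rate_deriv t * tri_prod_im t - (tri_rate t)\<^sup>2 * tri_prod_re t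
      = a * b * ((tri_dot a2 a1 t / b + tri_dot k a5 t / a - tri_dot a5 k t / a - tri_dot a1 a2 t / b)\<^sup>2
          + (tri_dot a2 a1 t / b * (tri_dot a1 a2 t / b) - tri_dot k a5 t / a * (tri_dot a5 k t / a))\<^sup>2)
        / (4 * t\<^sup>2)"
    unfolding rate_deriv im re rate by (rule rate_ineq_identity[OF t])
  then show ?thesis using a b by simp
qed

lemma tri_prod_re_neg_if_im_zero: "tri_prod_im t = 0 \<Longrightarrow> tri_prod_re t < 0"
proof -
  assume im: "tri_prod_im t = 0"
  define a where "a = tri_cross a5 k t"
  define b where "b = tri_cross a1 a2 t"
  have a: "a > 0" and b: "b > 0"
    using tri_cross_pos gram1 gram2 unfolding a_def b_def by auto
  from im have "tri_dot k a5 t = - tri_dot a2 a1 t * a / b"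
    unfolding tri_prod_im_def a_def[symmetric] b_def[symmetric] using b by (simp add: field_simps)
  then have "tri_prod_re t = - ((tri_dot a2 a1 t)\<^sup>2 * a / b + a * b)"
    unfolding tri_prod_re_def a_def[symmetric] b_def[symmetric] by (simp add: power2_eq_square)
  also have "\<dots> < 0"
    using a b by (smt (verit) divide_nonneg_pos mult_pos_pos zero_le_mult_iff zero_le_power2)
  finally show ?thesis .
qed

text \<open>Since rot_re'' = tri_rate_deriv rot_im - tri_rate^2 rot_re, this is concavity of -rot_re.\<close>

lemma rot_re_second_deriv_nonneg:
  assumes "tri_prod_im t \<ge> 0" and "c2 \<ge> 0" and "rot_im c1 c2 t \<ge> 0" and "c2 = 0 \<Longrightarrow> c1 \<ge> 0"
  shows "tri_rate_deriv t * rot_im c1 c2 t - (tri_rate t)\<^sup>2 * rot_re c1 c2 t \<ge> 0"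
proof -
  have "c1 * tri_prod_im t + c2 * tri_prod_re t \<ge> 0"
    using assms(3) t unfolding rot_im_def by (simp add: zero_le_divide_iff)
  then have "tri_rate_deriv t * (c1 * tri_prod_im t + c2 * tri_prod_re t)
      - (tri_rate t)\<^sup>2 * (c1 * tri_prod_re t - c2 * tri_prod_im t) \<ge> 0"
    by (intro rotated_combination_nonneg tri_rate_deriv_ineq tri_prod_re_neg_if_im_zero assms) auto
  moreover have "tri_rate_deriv t * rot_im c1 c2 t - (tri_rate t)\<^sup>2 * rot_re c1 c2 t
      = (tri_rate_deriv t * (c1 * tri_prod_im t + c2 * tri_prod_re t)
         - (tri_rate t)\<^sup>2 * (c1 * tri_prod_re t - c2 * tri_prod_im t)) / t"
    unfolding rot_im_def rot_re_def using t by (simp add: field_simps)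
  ultimately show ?thesis using t by simp
qed

lemma rot_slope_has_nonpos_deriv:
  assumes "m > 0" and "tri_prod_im t \<ge> 0" and "c2 \<ge> 0" and "rot_im c1 c2 t \<ge> 0"
    and "c2 = 0 \<Longrightarrow> c1 \<ge> 0"
  shows "\<exists>d \<le> 0. ((\<lambda>s. - (tri_rate s * rot_im c1 c2 s) / m) has_real_derivative d) (at t)"
proof -
  have "((\<lambda>s. - (tri_rate s * rot_im c1 c2 s) / m) has_real_derivative
      - (tri_rate t * (- (tri_rate t * rot_re c1 c2 t)) + tri_rate_deriv t * rot_im c1 c2 t) / m) (at t)"
    by (intro DERIV_cdivide DERIV_minus DERIV_mult' has_real_derivative_rot_im
        has_real_derivative_tri_rate)
  moreover have "- (tri_rate t * (- (tri_rate t * rot_re c1 c2 t)) + tri_rate_deriv t * rot_im c1 c2 t) / m \<le> 0"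
    using rot_re_second_deriv_nonneg[OF assms(2-5)] assms(1)
    by (intro divide_nonpos_pos) (auto simp: power2_eq_square algebra_simps)
  ultimately show ?thesis by blast
qed

lemma has_real_derivative_rot_re_affine:
  "((\<lambda>s. C - rot_re c1 c2 s / m) has_real_derivative - (tri_rate t * rot_im c1 c2 t) / m) (at t)"
proof -
  have "((\<lambda>s. C - rot_re c1 c2 s / m) has_real_derivative 0 - tri_rate t * rot_im c1 c2 t / m) (at t)"
    by (intro DERIV_diff DERIV_const DERIV_cdivide has_real_derivative_rot_re)
  then show ?thesis by simp
qed

end

end

section \<open>Convexity of the energy along a slice\<close>

definition inv_sqrt_slope :: "real \<Rightarrow> (real \<Rightarrow> real) \<Rightarrow> (real \<Rightarrow> real) \<Rightarrow> real \<Rightarrow> real" where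
  "inv_sqrt_slope c X X' s = - c * X' s / (2 * X s * sqrt (X s))"

lemma has_real_derivative_inverse_sqrt:
  assumes X: "(X has_real_derivative X' t) (at t)" and pos: "X t > 0"
  shows "((\<lambda>s. c / sqrt (X s)) has_real_derivative inv_sqrt_slope c X X' t) (at t)"
proof -
  have "((\<lambda>s. sqrt (X s)) has_real_derivative inverse (sqrt (X t)) / 2 * X' t) (at t)"
    by (rule DERIV_chain2[OF DERIV_real_sqrt[OF pos] X])
  then have "((\<lambda>s. c / sqrt (X s)) has_real_derivative
      (0 * sqrt (X t) - c * (inverse (sqrt (X t)) / 2 * X' t)) / (sqrt (X t) * sqrt (X t))) (at t)"
    by (rule DERIV_divide[OF DERIV_const]) (use pos in simp)
  then show ?thesis
    by (rule DERIV_cong) (use pos in \<open>simp add: inv_sqrt_slope_def field_simps\<close>)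
qed

lemma has_real_derivative_inv_sqrt_slope:
  assumes X: "(X has_real_derivative X' t) (at t)" and X': "(X' has_real_derivative X'') (at t)"
    and pos: "X t > 0"
  shows "(inv_sqrt_slope c X X' has_real_derivative
           c * (3 * (X' t)\<^sup>2 / (4 * (X t)\<^sup>2 * sqrt (X t)) - X'' / (2 * X t * sqrt (X t)))) (at t)"
proof -
  have sqrt: "((\<lambda>s. sqrt (X s)) has_real_derivative inverse (sqrt (X t)) / 2 * X' t) (at t)"
    by (rule DERIV_chain2[OF DERIV_real_sqrt[OF pos] X])
  have denom: "((\<lambda>s. 2 * X s * sqrt (X s)) has_real_derivative
      (2 * X t) * (inverse (sqrt (X t)) / 2 * X' t) + (2 * X' t) * sqrt (X t)) (at t)"
    by (intro DERIV_mult' DERIV_cmult X sqrt)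
  have deriv: "((\<lambda>s. - c * X' s / (2 * X s * sqrt (X s))) has_real_derivative
      ((- c * X'') * (2 * X t * sqrt (X t))
        - (- c * X' t) * ((2 * X t) * (inverse (sqrt (X t)) / 2 * X' t) + (2 * X' t) * sqrt (X t)))
      / ((2 * X t * sqrt (X t)) * (2 * X t * sqrt (X t)))) (at t)"
    by (rule DERIV_divide[OF DERIV_cmult[OF X'] denom]) (use pos in simp)
  have "sqrt (X t) * sqrt (X t) = X t" and "sqrt (X t) > 0"
    using pos by simp_all
  then have "((- c * X'') * (2 * X t * sqrt (X t))
        - (- c * X' t) * ((2 * X t) * (inverse (sqrt (X t)) / 2 * X' t) + (2 * X' t) * sqrt (X t)))
      / ((2 * X t * sqrt (X t)) * (2 * X t * sqrt (X t)))
    = c * (3 * (X' t)\<^sup>2 / (4 * (X t)\<^sup>2 * sqrt (X t)) - X'' / (2 * X t * sqrt (X t)))"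
    using pos by (simp add: field_simps power2_eq_square)
  then show ?thesis
    unfolding inv_sqrt_slope_def[abs_def] by (rule DERIV_cong[OF deriv])
qed

lemma inv_sqrt_slope_has_nonneg_deriv:
  assumes "(X has_real_derivative X' t) (at t)" and "\<exists>X'' \<le> 0. (X' has_real_derivative X'') (at t)"
    and "X t > 0" and "c \<ge> 0"
  shows "\<exists>d \<ge> 0. (inv_sqrt_slope c X X' has_real_derivative d) (at t)"
proof -
  obtain X'' where "X'' \<le> 0" and X'': "(X' has_real_derivative X'') (at t)"
    using assms(2) by blast
  moreover have "3 * (X' t)\<^sup>2 / (4 * (X t)\<^sup>2 * sqrt (X t)) \<ge> 0"
    using assms(3) by simp
  moreover have "X'' / (2 * X t * sqrt (X t)) \<le> 0"
    using assms(3) \<open>X'' \<le> 0\<close> by (simp add: divide_nonpos_pos)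
  ultimately have "c * (3 * (X' t)\<^sup>2 / (4 * (X t)\<^sup>2 * sqrt (X t)) - X'' / (2 * X t * sqrt (X t))) \<ge> 0"
    using assms(4) by simp
  then show ?thesis
    using has_real_derivative_inv_sqrt_slope[OF assms(1) X'' assms(3)] by blast
qed

text \<open>The squared diagonals b_1^2, b_3^2, b_5^2 as functions of t = x_2 on a slice b_4 = k;
dot4 + i cross4 describes the triangle A3 A4 A5 in the same way as tri_prod does for the
other two triangles.\<close>

context
  fixes a1 a2 a3 a4 a5 k :: real
begin

definition dot4 :: real where
  "dot4 = tri_dot a3 a4 (k\<^sup>2)"

definition cross4 :: real where
  "cross4 = tri_cross a3 a4 (k\<^sup>2)"

definition diag1_sq :: "real \<Rightarrow> real" where
  "diag1_sq t = a2\<^sup>2 + k\<^sup>2 - rot_re a5 k a1 a2 1 0 t / 2"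

definition diag1_slope :: "real \<Rightarrow> real" where
  "diag1_slope t = - (tri_rate a5 k a1 a2 t * rot_im a5 k a1 a2 1 0 t) / 2"

definition diag3_sq :: "real \<Rightarrow> real" where
  "diag3_sq t = a2\<^sup>2 + a3\<^sup>2 - rot_re a5 k a1 a2 dot4 cross4 t / (4 * k\<^sup>2)"

definition diag3_slope :: "real \<Rightarrow> real" where
  "diag3_slope t = - (tri_rate a5 k a1 a2 t * rot_im a5 k a1 a2 dot4 cross4 t) / (4 * k\<^sup>2)"

definition diag5_sq :: "real \<Rightarrow> real" where
  "diag5_sq t = t + a3\<^sup>2 - (dot4 * tri_dot k a5 t - cross4 * tri_cross a5 k t) / (2 * k\<^sup>2)"

definition diag5_slope :: "real \<Rightarrow> real" where
  "diag5_slope t = 1 - (dot4 - cross4 * ((a5\<^sup>2 + k\<^sup>2 - t) / tri_cross a5 k t)) / (2 * k\<^sup>2)"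

lemma cross4_nonneg: "tri_gram a3 a4 (k\<^sup>2) \<ge> 0 \<Longrightarrow> cross4 \<ge> 0"
  unfolding cross4_def tri_cross_def by simp

context
  fixes t :: real
  assumes t: "t > 0" and gram1: "tri_gram a5 k t > 0" and gram2: "tri_gram a1 a2 t > 0"
begin

lemma has_real_derivative_diag1_sq: "(diag1_sq has_real_derivative diag1_slope t) (at t)"
  unfolding diag1_sq_def[abs_def] diag1_slope_def
  by (rule has_real_derivative_rot_re_affine[OF t gram1 gram2])

lemma diag1_slope_has_nonpos_deriv:
  assumes "tri_prod_im a5 k a1 a2 t \<ge> 0"
  shows "\<exists>d \<le> 0. (diag1_slope has_real_derivative d) (at t)"
  unfolding diag1_slope_def[abs_def]
  by (rule rot_slope_has_nonpos_deriv[OF t gram1 gram2])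
     (use assms t in \<open>auto simp: rot_im_def\<close>)

lemma has_real_derivative_diag3_sq: "(diag3_sq has_real_derivative diag3_slope t) (at t)"
  unfolding diag3_sq_def[abs_def] diag3_slope_def
  by (rule has_real_derivative_rot_re_affine[OF t gram1 gram2])

lemma diag3_slope_has_nonpos_deriv:
  assumes "k \<noteq> 0" and "tri_prod_im a5 k a1 a2 t \<ge> 0" and "tri_gram a3 a4 (k\<^sup>2) \<ge> 0"
    and "rot_im a5 k a1 a2 dot4 cross4 t \<ge> 0" and "cross4 = 0 \<Longrightarrow> dot4 \<ge> 0"
  shows "\<exists>d \<le> 0. (diag3_slope has_real_derivative d) (at t)"
  unfolding diag3_slope_def[abs_def]
  by (rule rot_slope_has_nonpos_deriv[OF t gram1 gram2])
     (use assms cross4_nonneg in auto)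

lemma has_real_derivative_diag5_sq: "(diag5_sq has_real_derivative diag5_slope t) (at t)"
proof -
  have "(diag5_sq has_real_derivative
      1 + 0 - (dot4 * 1 - cross4 * ((a5\<^sup>2 + k\<^sup>2 - t) / tri_cross a5 k t)) / (2 * k\<^sup>2)) (at t)"
    unfolding diag5_sq_def[abs_def]
    by (intro DERIV_diff DERIV_add DERIV_ident DERIV_const DERIV_cdivide DERIV_cmult
        has_real_derivative_tri_dot has_real_derivative_tri_cross gram1)
  then show ?thesis unfolding diag5_slope_def by simp
qed

lemma diag5_slope_has_nonpos_deriv:
  assumes "tri_gram a3 a4 (k\<^sup>2) \<ge> 0"
  shows "\<exists>d \<le> 0. (diag5_slope has_real_derivative d) (at t)"
proof -
  obtain d where d: "d \<le> 0"
    and deriv: "((\<lambda>t. (a5\<^sup>2 + k\<^sup>2 - t) / tri_cross a5 k t) has_real_derivative d) (at t)"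
    using tri_cross_slope_has_nonpos_deriv[OF gram1] by blast
  have "(diag5_slope has_real_derivative 0 - (0 - cross4 * d) / (2 * k\<^sup>2)) (at t)"
    unfolding diag5_slope_def[abs_def]
    by (intro DERIV_diff DERIV_const DERIV_cdivide DERIV_cmult deriv)
  moreover have "0 - (0 - cross4 * d) / (2 * k\<^sup>2) \<le> 0"
    using cross4_nonneg[OF assms] d by (simp add: mult_nonneg_nonpos divide_nonpos_nonneg)
  ultimately show ?thesis by blast
qed

end

end

text \<open>The analytic conditions on a slice parameter t that the convexity of the pentagon
provides; they are all that the convexity argument needs.\<close>

definition slice_conditions :: "(5 \<Rightarrow> real) \<Rightarrow> real \<Rightarrow> real \<Rightarrow> bool" where
  "slice_conditions a k t \<longleftrightarrow>
     k > 0 \<and> tri_gram (a 5) k t > 0 \<and> tri_gram (a 1) (a 2) t > 0 \<and> tri_gram (a 3) (a 4) (k\<^sup>2) \<ge> 0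
   \<and> tri_prod_im (a 5) k (a 1) (a 2) t \<ge> 0
   \<and> rot_im (a 5) k (a 1) (a 2) (dot4 (a 3) (a 4) k) (cross4 (a 3) (a 4) k) t \<ge> 0
   \<and> (cross4 (a 3) (a 4) k = 0 \<longrightarrow> dot4 (a 3) (a 4) k \<ge> 0)
   \<and> diag1_sq (a 1) (a 2) (a 5) k t > 0 \<and> diag3_sq (a 1) (a 2) (a 3) (a 4) (a 5) k t > 0
   \<and> diag5_sq (a 3) (a 4) (a 5) k t > 0"

definition energy_param :: "(5 \<Rightarrow> real) \<Rightarrow> (5 \<Rightarrow> real) \<Rightarrow> real \<Rightarrow> real \<Rightarrow> real" where
  "energy_param a q k t =
     q 2 * q 5 / sqrt (diag1_sq (a 1) (a 2) (a 5) k t) + q 1 * q 3 / sqrt t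
   + q 2 * q 4 / sqrt (diag3_sq (a 1) (a 2) (a 3) (a 4) (a 5) k t)
   + q 1 * q 4 / sqrt (diag5_sq (a 3) (a 4) (a 5) k t) + q 3 * q 5 / k"

definition energy_param_slope :: "(5 \<Rightarrow> real) \<Rightarrow> (5 \<Rightarrow> real) \<Rightarrow> real \<Rightarrow> real \<Rightarrow> real" where
  "energy_param_slope a q k t =
     inv_sqrt_slope (q 2 * q 5) (diag1_sq (a 1) (a 2) (a 5) k) (diag1_slope (a 1) (a 2) (a 5) k) t
   + inv_sqrt_slope (q 1 * q 3) (\<lambda>s. s) (\<lambda>s. 1) t
   + inv_sqrt_slope (q 2 * q 4) (diag3_sq (a 1) (a 2) (a 3) (a 4) (a 5) k)
       (diag3_slope (a 1) (a 2) (a 3) (a 4) (a 5) k) t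
   + inv_sqrt_slope (q 1 * q 4) (diag5_sq (a 3) (a 4) (a 5) k) (diag5_slope (a 3) (a 4) (a 5) k) t"

lemma slice_conditions_param_pos: "slice_conditions a k t \<Longrightarrow> t > 0"
  unfolding slice_conditions_def using pos_of_tri_gram_pos by blast

lemma has_real_derivative_energy_param:
  assumes "slice_conditions a k t"
  shows "(energy_param a q k has_real_derivative energy_param_slope a q k t) (at t)"
proof -
  have t: "t > 0" using slice_conditions_param_pos[OF assms] .
  have g1: "tri_gram (a 5) k t > 0" and g2: "tri_gram (a 1) (a 2) t > 0"
    and pos1: "diag1_sq (a 1) (a 2) (a 5) k t > 0" and pos3: "diag3_sq (a 1) (a 2) (a 3) (a 4) (a 5) k t > 0"
    and pos5: "diag5_sq (a 3) (a 4) (a 5) k t > 0"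
    using assms unfolding slice_conditions_def by auto
  have sqrt: "((\<lambda>s. q 1 * q 3 / sqrt s) has_real_derivative
      inv_sqrt_slope (q 1 * q 3) (\<lambda>s. s) (\<lambda>s. 1) t) (at t)"
    using has_real_derivative_inverse_sqrt[where X="\<lambda>s. s" and X'="\<lambda>s. 1", OF DERIV_ident] t by simp
  have "(energy_param a q k has_real_derivative energy_param_slope a q k t + 0) (at t)"
    unfolding energy_param_def[abs_def] energy_param_slope_def
    by (intro DERIV_add DERIV_const sqrt has_real_derivative_inverse_sqrt pos1 pos3 pos5
        has_real_derivative_diag1_sq[OF t g1 g2] has_real_derivative_diag3_sq[OF t g1 g2]
        has_real_derivative_diag5_sq[OF t g1 g2])
  then show ?thesis by simp
qed

lemma energy_param_slope_has_pos_deriv: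
  assumes "slice_conditions a k t" and "\<forall>i. q i > 0"
  shows "\<exists>d > 0. (energy_param_slope a q k has_real_derivative d) (at t)"
proof -
  have t: "t > 0" using slice_conditions_param_pos[OF assms(1)] .
  have k: "k \<noteq> 0" and g1: "tri_gram (a 5) k t > 0" and g2: "tri_gram (a 1) (a 2) t > 0"
    and g4: "tri_gram (a 3) (a 4) (k\<^sup>2) \<ge> 0" and im: "tri_prod_im (a 5) k (a 1) (a 2) t \<ge> 0"
    and rot: "rot_im (a 5) k (a 1) (a 2) (dot4 (a 3) (a 4) k) (cross4 (a 3) (a 4) k) t \<ge> 0"
    and c4: "cross4 (a 3) (a 4) k = 0 \<Longrightarrow> dot4 (a 3) (a 4) k \<ge> 0"
    and pos1: "diag1_sq (a 1) (a 2) (a 5) k t > 0" and pos3: "diag3_sq (a 1) (a 2) (a 3) (a 4) (a 5) k t > 0"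
    and pos5: "diag5_sq (a 3) (a 4) (a 5) k t > 0"
    using assms(1) unfolding slice_conditions_def by auto
  have q: "q i * q j \<ge> 0" for i j using assms(2) by (simp add: less_imp_le)
  obtain d1 where "d1 \<ge> 0"
    and d1: "(inv_sqrt_slope (q 2 * q 5) (diag1_sq (a 1) (a 2) (a 5) k) (diag1_slope (a 1) (a 2) (a 5) k)
              has_real_derivative d1) (at t)"
    using inv_sqrt_slope_has_nonneg_deriv[OF has_real_derivative_diag1_sq[OF t g1 g2]
        diag1_slope_has_nonpos_deriv[OF t g1 g2 im] pos1 q] by blast
  obtain d3 where "d3 \<ge> 0"
    and d3: "(inv_sqrt_slope (q 2 * q 4) (diag3_sq (a 1) (a 2) (a 3) (a 4) (a 5) k)
               (diag3_slope (a 1) (a 2) (a 3) (a 4) (a 5) k) has_real_derivative d3) (at t)"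
    using inv_sqrt_slope_has_nonneg_deriv[OF has_real_derivative_diag3_sq[OF t g1 g2]
        diag3_slope_has_nonpos_deriv[OF t g1 g2 k im g4 rot c4] pos3 q] by blast
  obtain d5 where "d5 \<ge> 0"
    and d5: "(inv_sqrt_slope (q 1 * q 4) (diag5_sq (a 3) (a 4) (a 5) k) (diag5_slope (a 3) (a 4) (a 5) k)
              has_real_derivative d5) (at t)"
    using inv_sqrt_slope_has_nonneg_deriv[OF has_real_derivative_diag5_sq[OF t g1 g2]
        diag5_slope_has_nonpos_deriv[OF t g1 g2 g4] pos5 q] by blast
  define d2 where "d2 = q 1 * q 3 * (3 / (4 * t\<^sup>2 * sqrt t))"
  have "d2 > 0" unfolding d2_def using assms(2) t by simp
  have d2: "(inv_sqrt_slope (q 1 * q 3) (\<lambda>s. s) (\<lambda>s. 1) has_real_derivative d2) (at t)"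
    using has_real_derivative_inv_sqrt_slope[where X="\<lambda>s. s", OF DERIV_ident DERIV_const] t
    unfolding d2_def by simp
  have "(energy_param_slope a q k has_real_derivative d1 + d2 + d3 + d5) (at t)"
    unfolding energy_param_slope_def[abs_def] by (intro DERIV_add d1 d2 d3 d5)
  moreover have "d1 + d2 + d3 + d5 > 0"
    using \<open>d1 \<ge> 0\<close> \<open>d2 > 0\<close> \<open>d3 \<ge> 0\<close> \<open>d5 \<ge> 0\<close> by linarith
  ultimately show ?thesis by blast
qed

section \<open>Convex pentagons\<close>

lemma cmod_diff_power2: "(cmod (u - v))\<^sup>2 = (cmod u)\<^sup>2 + (cmod v)\<^sup>2 - 2 * Re (cnj v * u)"
  by (simp add: cmod_power2 power2_diff algebra_simps)

lemma cnj_mult_self: "cnj z * z = complex_of_real ((cmod z)\<^sup>2)"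
  by (metis complex_norm_square mult.commute of_real_power)

lemma cnj_mult_tri:
  assumes u: "cmod u = x" and v: "(cmod v)\<^sup>2 = t" and uv: "cmod (u - v) = y"
  shows "Re (cnj u * v) = tri_dot x y t / 2" and "\<bar>Im (cnj u * v)\<bar> = tri_cross x y t / 2"
    and "tri_gram x y t \<ge> 0"
proof -
  define z where "z = cnj u * v"
  have "Re (cnj v * u) = Re z" unfolding z_def by (simp add: algebra_simps)
  then show re: "Re (cnj u * v) = tri_dot x y t / 2"
    using cmod_diff_power2[of u v] u v uv unfolding tri_dot_def z_def by simp
  have "(cmod z)\<^sup>2 = x\<^sup>2 * t"
    unfolding z_def using u v by (simp add: norm_mult power_mult_distrib)
  then have "(Re z)\<^sup>2 + (Im z)\<^sup>2 = x\<^sup>2 * t"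
    by (simp only: cmod_power2)
  moreover have "Re z = tri_dot x y t / 2" using re unfolding z_def .
  ultimately have "(Im z)\<^sup>2 = x\<^sup>2 * t - (tri_dot x y t / 2)\<^sup>2"
    by simp
  also have "\<dots> = tri_gram x y t / 4"
    unfolding tri_gram_def by (simp add: power_divide field_simps)
  finally have im: "(Im z)\<^sup>2 = tri_gram x y t / 4" .
  then show "tri_gram x y t \<ge> 0"
    by (metis zero_le_power2 divide_nonneg_pos zero_less_numeral le_divide_eq_numeral1(1) mult_zero_left)
  have "\<bar>Im z\<bar> = sqrt ((Im z)\<^sup>2)" by simp
  also have "\<dots> = tri_cross x y t / 2"
    unfolding im tri_cross_def by (simp add: real_sqrt_divide)
  finally show "\<bar>Im (cnj u * v)\<bar> = tri_cross x y t / 2" unfolding z_def .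
qed

text \<open>A convex pentagon placed with A3 at the origin: v_i = A_i - A_3.  The orientation
hypotheses are those consequences of convexity that the argument uses.\<close>

context
  fixes v1 v2 v4 v5 :: complex and a :: "5 \<Rightarrow> real" and k t :: real
  assumes norm_v5: "cmod v5 = k" and norm_v1: "(cmod v1)\<^sup>2 = t"
    and norm_v2: "cmod v2 = a 2" and norm_v4: "cmod v4 = a 3"
    and side1: "cmod (v2 - v1) = a 1" and side4: "cmod (v4 - v5) = a 4" and side5: "cmod (v1 - v5) = a 5"
    and k_pos: "k > 0" and gram1: "tri_gram (a 5) k t > 0" and gram2: "tri_gram (a 1) (a 2) t > 0"
    and turn51: "Im (cnj v5 * v1) \<ge> 0" and turn12: "Im (cnj v1 * v2) \<ge> 0"
    and turn54: "Im (cnj v5 * v4) \<le> 0" and turn52: "Im (cnj v5 * v2) \<ge> 0"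
    and turn42: "Im (cnj v4 * v2) \<ge> 0" and turn41: "Im (cnj v4 * v1) \<ge> 0"
begin

lemma config_param_pos: "t > 0"
  using pos_of_tri_gram_pos[OF gram1] .

lemma cnj_v5_mult_v1: "cnj v5 * v1 = Complex (tri_dot k (a 5) t / 2) (tri_cross (a 5) k t / 2)"
proof -
  have "cmod (v5 - v1) = a 5" using side5 by (simp add: norm_minus_commute)
  note tri = cnj_mult_tri[OF norm_v5 norm_v1 this]
  show ?thesis
    using tri(1) tri(2)[unfolded tri_cross_sym[of k]] turn51 by (simp add: complex_eq_iff)
qed

lemma cnj_v1_mult_v2: "cnj v1 * v2 = Complex (tri_dot (a 2) (a 1) t / 2) (tri_cross (a 1) (a 2) t / 2)"
proof -
  note tri = cnj_mult_tri[OF norm_v2 norm_v1 side1]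
  have "cnj v1 * v2 = cnj (cnj v2 * v1)" by simp
  moreover have "Im (cnj v2 * v1) \<le> 0" using turn12 by (simp add: algebra_simps)
  ultimately show ?thesis
    using tri(1) tri(2)[unfolded tri_cross_sym[of "a 2"]] by (simp add: complex_eq_iff algebra_simps)
qed

lemma gram4_nonneg: "tri_gram (a 3) (a 4) (k\<^sup>2) \<ge> 0"
  using cnj_mult_tri(3)[OF norm_v4 _ side4] norm_v5 by simp

lemma cnj_v5_mult_v4: "cnj v5 * v4 = Complex (dot4 (a 3) (a 4) k / 2) (- cross4 (a 3) (a 4) k / 2)"
proof -
  have "(cmod v5)\<^sup>2 = k\<^sup>2" using norm_v5 by simp
  note tri = cnj_mult_tri[OF norm_v4 this side4]
  have "cnj v5 * v4 = cnj (cnj v4 * v5)" by simp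
  moreover have "Im (cnj v4 * v5) \<ge> 0" using turn54 by (simp add: algebra_simps)
  ultimately show ?thesis
    using tri(1,2) unfolding dot4_def cross4_def by (simp add: complex_eq_iff algebra_simps)
qed

lemma cnj_v5_mult_v2:
  "cnj v5 * v2 = Complex (tri_prod_re (a 5) k (a 1) (a 2) t / (4 * t)) (tri_prod_im (a 5) k (a 1) (a 2) t / (4 * t))"
proof -
  have t: "t > 0" by (rule config_param_pos)
  have "(cnj v5 * v1) * (cnj v1 * v2) = (cnj v5 * v2) * (cnj v1 * v1)" by (simp add: algebra_simps)
  also have "cnj v1 * v1 = complex_of_real t" using cnj_mult_self[of v1] norm_v1 by simp
  finally have prod: "(cnj v5 * v1) * (cnj v1 * v2) = (cnj v5 * v2) * complex_of_real t" .
  have "cnj v5 * v2 = (cnj v5 * v1) * (cnj v1 * v2) / complex_of_real t"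
    unfolding prod using t by simp
  also have "\<dots> = Complex (tri_prod_re (a 5) k (a 1) (a 2) t / (4 * t)) (tri_prod_im (a 5) k (a 1) (a 2) t / (4 * t))"
    unfolding cnj_v5_mult_v1 cnj_v1_mult_v2 tri_prod_re_def tri_prod_im_def
    using t by (simp add: complex_eq_iff field_simps Complex_eq)
  finally show ?thesis .
qed

lemma cnj_v4_mult_eq: "cnj v4 * z = cnj (cnj v5 * v4) * (cnj v5 * z) / complex_of_real (k\<^sup>2)"
proof -
  have "cnj (cnj v5 * v4) * (cnj v5 * z) = (cnj v4 * z) * (cnj v5 * v5)" by (simp add: algebra_simps)
  also have "cnj v5 * v5 = complex_of_real (k\<^sup>2)" using cnj_mult_self[of v5] norm_v5 by simp
  finally have prod: "cnj (cnj v5 * v4) * (cnj v5 * z) = (cnj v4 * z) * complex_of_real (k\<^sup>2)" .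
  show ?thesis unfolding prod using k_pos by simp
qed

lemma cnj_v4_mult_v2:
  "cnj v4 * v2 = Complex (rot_re (a 5) k (a 1) (a 2) (dot4 (a 3) (a 4) k) (cross4 (a 3) (a 4) k) t / (8 * k\<^sup>2))
                         (rot_im (a 5) k (a 1) (a 2) (dot4 (a 3) (a 4) k) (cross4 (a 3) (a 4) k) t / (8 * k\<^sup>2))"
  unfolding cnj_v4_mult_eq cnj_v5_mult_v4 cnj_v5_mult_v2 rot_re_def rot_im_def
  using config_param_pos k_pos by (simp add: complex_eq_iff field_simps Complex_eq)

lemma cnj_v4_mult_v1:
  "cnj v4 * v1 = Complex ((dot4 (a 3) (a 4) k * tri_dot k (a 5) t - cross4 (a 3) (a 4) k * tri_cross (a 5) k t) / (4 * k\<^sup>2))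
                         ((dot4 (a 3) (a 4) k * tri_cross (a 5) k t + cross4 (a 3) (a 4) k * tri_dot k (a 5) t) / (4 * k\<^sup>2))"
  unfolding cnj_v4_mult_eq cnj_v5_mult_v4 cnj_v5_mult_v1
  using k_pos by (simp add: complex_eq_iff field_simps Complex_eq)

lemma norm_v2_minus_v5: "(cmod (v2 - v5))\<^sup>2 = diag1_sq (a 1) (a 2) (a 5) k t"
proof -
  have "Re (cnj v5 * v2) = tri_prod_re (a 5) k (a 1) (a 2) t / (4 * t)"
    unfolding cnj_v5_mult_v2 by simp
  then show ?thesis
    unfolding cmod_diff_power2 norm_v2 norm_v5 diag1_sq_def rot_re_def
    using config_param_pos by (simp add: field_simps)
qed

lemma norm_v2_minus_v4: "(cmod (v2 - v4))\<^sup>2 = diag3_sq (a 1) (a 2) (a 3) (a 4) (a 5) k t"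
proof -
  have "Re (cnj v4 * v2) = rot_re (a 5) k (a 1) (a 2) (dot4 (a 3) (a 4) k) (cross4 (a 3) (a 4) k) t / (8 * k\<^sup>2)"
    unfolding cnj_v4_mult_v2 by simp
  then show ?thesis
    unfolding cmod_diff_power2 norm_v2 norm_v4 diag3_sq_def
    using k_pos by (simp add: field_simps)
qed

lemma norm_v1_minus_v4: "(cmod (v1 - v4))\<^sup>2 = diag5_sq (a 3) (a 4) (a 5) k t"
proof -
  have "Re (cnj v4 * v1) = (dot4 (a 3) (a 4) k * tri_dot k (a 5) t - cross4 (a 3) (a 4) k * tri_cross (a 5) k t) / (4 * k\<^sup>2)"
    unfolding cnj_v4_mult_v1 by simp
  then show ?thesis
    unfolding cmod_diff_power2 norm_v1 norm_v4 diag5_sq_def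
    using k_pos by (simp add: field_simps)
qed

lemma tri_prod_im_nonneg: "tri_prod_im (a 5) k (a 1) (a 2) t \<ge> 0"
  using turn52 config_param_pos unfolding cnj_v5_mult_v2 by (simp add: zero_le_divide_iff)

lemma rot_im_nonneg: "rot_im (a 5) k (a 1) (a 2) (dot4 (a 3) (a 4) k) (cross4 (a 3) (a 4) k) t \<ge> 0"
  using turn42 k_pos unfolding cnj_v4_mult_v2 by (simp add: zero_le_divide_iff)

lemma dot4_nonneg: "cross4 (a 3) (a 4) k = 0 \<Longrightarrow> dot4 (a 3) (a 4) k \<ge> 0"
proof -
  assume cross4: "cross4 (a 3) (a 4) k = 0"
  have "dot4 (a 3) (a 4) k * tri_cross (a 5) k t \<ge> 0"
    using turn41 k_pos unfolding cnj_v4_mult_v1 cross4 by (simp add: zero_le_divide_iff)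
  then show ?thesis using tri_cross_pos[OF gram1] by (simp add: zero_le_mult_iff)
qed

text \<open>The three diagonals do not degenerate: e.g. v2 = v5 would make cnj v5 * v2 a positive real,
whereas tri_prod_re < 0 whenever tri_prod_im = 0.\<close>

lemma diag1_sq_pos: "diag1_sq (a 1) (a 2) (a 5) k t > 0"
proof -
  have "v2 \<noteq> v5"
  proof
    assume "v2 = v5"
    then have "cnj v5 * v2 = complex_of_real (k\<^sup>2)" using cnj_mult_self[of v5] norm_v5 by simp
    then have im: "tri_prod_im (a 5) k (a 1) (a 2) t = 0" and re: "tri_prod_re (a 5) k (a 1) (a 2) t / (4 * t) = k\<^sup>2"
      using config_param_pos unfolding cnj_v5_mult_v2 by (simp_all add: complex_eq_iff)
    have "tri_prod_re (a 5) k (a 1) (a 2) t < 0"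
      using tri_prod_re_neg_if_im_zero[OF config_param_pos gram1 gram2 im] .
    then have "tri_prod_re (a 5) k (a 1) (a 2) t / (4 * t) < 0"
      using config_param_pos by (simp add: divide_neg_pos)
    with re k_pos show False by simp
  qed
  then show ?thesis using norm_v2_minus_v5 by (metis zero_less_power zero_less_norm_iff right_minus_eq)
qed

lemma diag5_sq_pos: "diag5_sq (a 3) (a 4) (a 5) k t > 0"
proof -
  have "v1 \<noteq> v4"
  proof
    assume "v1 = v4"
    then have "tri_cross (a 5) k t / 2 = - cross4 (a 3) (a 4) k / 2"
      using cnj_v5_mult_v1 cnj_v5_mult_v4 by (simp add: complex_eq_iff)
    then show False
      using tri_cross_pos[OF gram1] cross4_nonneg[OF gram4_nonneg] by simp
  qed
  then show ?thesis using norm_v1_minus_v4 by (metis zero_less_power zero_less_norm_iff right_minus_eq)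
qed

lemma diag3_sq_pos: "diag3_sq (a 1) (a 2) (a 3) (a 4) (a 5) k t > 0"
proof -
  have "v2 \<noteq> v4"
  proof
    assume "v2 = v4"
    then have im: "tri_prod_im (a 5) k (a 1) (a 2) t / (4 * t) = - cross4 (a 3) (a 4) k / 2"
      and re: "tri_prod_re (a 5) k (a 1) (a 2) t / (4 * t) = dot4 (a 3) (a 4) k / 2"
      using cnj_v5_mult_v2 cnj_v5_mult_v4 by (simp_all add: complex_eq_iff)
    have "tri_prod_im (a 5) k (a 1) (a 2) t / (4 * t) \<ge> 0"
      using tri_prod_im_nonneg config_param_pos by simp
    then have "tri_prod_im (a 5) k (a 1) (a 2) t / (4 * t) = 0"
      using im cross4_nonneg[OF gram4_nonneg] by linarith
    then have "tri_prod_im (a 5) k (a 1) (a 2) t = 0"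
      using config_param_pos by simp
    with im have "cross4 (a 3) (a 4) k = 0" by simp
    then have "dot4 (a 3) (a 4) k \<ge> 0" by (rule dot4_nonneg)
    moreover have "tri_prod_re (a 5) k (a 1) (a 2) t < 0"
      using tri_prod_re_neg_if_im_zero[OF config_param_pos gram1 gram2] \<open>tri_prod_im _ _ _ _ t = 0\<close> .
    then have "tri_prod_re (a 5) k (a 1) (a 2) t / (4 * t) < 0"
      using config_param_pos by (simp add: divide_neg_pos)
    ultimately show False using re by simp
  qed
  then show ?thesis using norm_v2_minus_v4 by (metis zero_less_power zero_less_norm_iff right_minus_eq)
qed

lemma config_slice_conditions: "slice_conditions a k t"
  unfolding slice_conditions_def
  using k_pos gram1 gram2 gram4_nonneg tri_prod_im_nonneg rot_im_nonneg dot4_nonneg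
    diag1_sq_pos diag3_sq_pos diag5_sq_pos by blast

end

definition weakly_convex_ccw :: "pentagon \<Rightarrow> bool" where
  "weakly_convex_ccw A \<longleftrightarrow>
     (\<forall>i j::5. j \<noteq> i \<and> j \<noteq> i + 1 \<longrightarrow> cross (A $ (i + 1) - A $ i) (A $ j - A $ i) \<ge> 0)"

definition weakly_convex_cw :: "pentagon \<Rightarrow> bool" where
  "weakly_convex_cw A \<longleftrightarrow>
     (\<forall>i j::5. j \<noteq> i \<and> j \<noteq> i + 1 \<longrightarrow> cross (A $ (i + 1) - A $ i) (A $ j - A $ i) \<le> 0)"

lemma closed_weakly_convex_configs:
  "closed {A::pentagon. has_sides a A \<and> (weakly_convex_ccw A \<or> weakly_convex_cw A)}"
  unfolding has_sides_def weakly_convex_ccw_def weakly_convex_cw_def cross_def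
  by (intro closed_Collect_conj closed_Collect_disj closed_Collect_all closed_Collect_imp
      open_Collect_const closed_Collect_le closed_Collect_eq continuous_intros)

lemma MC_closure_weakly_convex:
  assumes "A \<in> MC_closure a"
  shows "has_sides a A \<and> (weakly_convex_ccw A \<or> weakly_convex_cw A)"
proof -
  have "MC a \<subseteq> {A. has_sides a A \<and> (weakly_convex_ccw A \<or> weakly_convex_cw A)}"
    unfolding MC_def strictly_convex_def weakly_convex_ccw_def weakly_convex_cw_def
    by (auto intro: less_imp_le)
  then show ?thesis
    using assms closure_minimal[OF _ closed_weakly_convex_configs] unfolding MC_closure_def by blast
qed

definition cnj_pentagon :: "pentagon \<Rightarrow> pentagon" where
  "cnj_pentagon A = (\<chi> i. cnj (A $ i))"

lemma cnj_pentagon_nth [simp]: "cnj_pentagon A $ i = cnj (A $ i)"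
  unfolding cnj_pentagon_def by simp

lemma dist_cnj: "dist (cnj z) (cnj w) = dist z w"
  by (simp add: dist_norm complex_cnj_diff[symmetric] del: complex_cnj_diff)

lemma has_sides_cnj_pentagon: "has_sides a (cnj_pentagon A) = has_sides a A"
  unfolding has_sides_def by (simp add: dist_cnj)

lemma cross_cnj: "cross (cnj z) (cnj w) = - cross z w"
  by (simp add: cross_def)

lemma weakly_convex_ccw_cnj_pentagon: "weakly_convex_cw A \<Longrightarrow> weakly_convex_ccw (cnj_pentagon A)"
  unfolding weakly_convex_cw_def weakly_convex_ccw_def
  by (auto simp: complex_cnj_diff[symmetric] cross_cnj simp del: complex_cnj_diff)

lemma diag_cnj_pentagon: "diag (cnj_pentagon A) i = diag A i"
  unfolding diag_def by (simp add: dist_cnj)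

lemma ccw_pentagon_slice_conditions:
  assumes sides: "has_sides a A" and ccw: "weakly_convex_ccw A" and k: "diag A 4 = k" and "k > 0"
    and t: "xdiag A 2 = t" and "tri_gram (a 5) k t > 0" and "tri_gram (a 1) (a 2) t > 0"
  shows "slice_conditions a k t" and "energy q A = energy_param a q k t"
proof -
  define v1 v2 v4 v5 where "v1 = A $ 1 - A $ 3" and "v2 = A $ 2 - A $ 3"
    and "v4 = A $ 4 - A $ 3" and "v5 = A $ 5 - A $ 3"
  have six: "(6::5) = 1" and five: "(5::5) = 0" by simp_all
  have side: "cmod (A $ i - A $ (i + 1)) = a i" for i
    using sides unfolding has_sides_def dist_norm by blast
  have turn: "cross (A $ (i + 1) - A $ i) (A $ j - A $ i) \<ge> 0" if "j \<noteq> i" "j \<noteq> i + 1" for i j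
    using ccw that unfolding weakly_convex_ccw_def by blast
  have norm_v5: "cmod v5 = k" using k unfolding diag_def v5_def by (simp add: dist_norm norm_minus_commute)
  have norm_v1: "(cmod v1)\<^sup>2 = t" using t unfolding xdiag_def diag_def v1_def by (simp add: dist_norm)
  have norm_v2: "cmod v2 = a 2" using side[of 2] unfolding v2_def by simp
  have norm_v4: "cmod v4 = a 3" using side[of 3] unfolding v4_def by (simp add: norm_minus_commute)
  have side1: "cmod (v2 - v1) = a 1" using side[of 1] unfolding v1_def v2_def by (simp add: norm_minus_commute)
  have side4: "cmod (v4 - v5) = a 4" using side[of 4] unfolding v4_def v5_def by simp
  have side5: "cmod (v1 - v5) = a 5" using side[of 5] unfolding v1_def v5_def by (simp add: six norm_minus_commute)
  have "cross (A $ 1 - A $ 5) (A $ 3 - A $ 5) \<ge> 0" using turn[of 3 5] by (simp add: six)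
  then have turn51: "Im (cnj v5 * v1) \<ge> 0" unfolding v1_def v5_def cross_def by (simp add: algebra_simps)
  have "cross (A $ 2 - A $ 1) (A $ 3 - A $ 1) \<ge> 0" using turn[of 3 1] by simp
  then have turn12: "Im (cnj v1 * v2) \<ge> 0" unfolding v1_def v2_def cross_def by (simp add: algebra_simps)
  have "cross (A $ 4 - A $ 3) (A $ 5 - A $ 3) \<ge> 0" using turn[of 5 3] by simp
  then have turn54: "Im (cnj v5 * v4) \<le> 0" unfolding v4_def v5_def cross_def by (simp add: algebra_simps)
  have "cross (A $ 3 - A $ 2) (A $ 5 - A $ 2) \<ge> 0" using turn[of 5 2] by simp
  then have turn52: "Im (cnj v5 * v2) \<ge> 0" unfolding v2_def v5_def cross_def by (simp add: algebra_simps)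
  have "cross (A $ 4 - A $ 3) (A $ 2 - A $ 3) \<ge> 0" using turn[of 2 3] by simp
  then have turn42: "Im (cnj v4 * v2) \<ge> 0" unfolding v2_def v4_def cross_def by (simp add: algebra_simps)
  have "cross (A $ 4 - A $ 3) (A $ 1 - A $ 3) \<ge> 0" using turn[of 1 3] by simp
  then have turn41: "Im (cnj v4 * v1) \<ge> 0" unfolding v1_def v4_def cross_def by (simp add: algebra_simps)
  note config = norm_v5 norm_v1 norm_v2 norm_v4 side1 side4 side5 assms(4,6,7)
    turn51 turn12 turn54 turn52 turn42 turn41
  show "slice_conditions a k t" by (rule config_slice_conditions[OF config])
  have diag1: "diag A 1 = sqrt (diag1_sq (a 1) (a 2) (a 5) k t)"
  proof -
    have "diag A 1 = cmod (v2 - v5)"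
      unfolding diag_def v2_def v5_def by (simp add: dist_norm norm_minus_commute five)
    then show ?thesis using norm_v2_minus_v5[OF config] by (metis norm_ge_zero real_sqrt_unique)
  qed
  have diag2: "diag A 2 = sqrt t"
  proof -
    have "diag A 2 = cmod v1" unfolding diag_def v1_def by (simp add: dist_norm)
    then show ?thesis using norm_v1 by (metis norm_ge_zero real_sqrt_unique)
  qed
  have diag3: "diag A 3 = sqrt (diag3_sq (a 1) (a 2) (a 3) (a 4) (a 5) k t)"
  proof -
    have "diag A 3 = cmod (v2 - v4)"
      unfolding diag_def v2_def v4_def by (simp add: dist_norm)
    then show ?thesis using norm_v2_minus_v4[OF config] by (metis norm_ge_zero real_sqrt_unique)
  qed
  have diag5: "diag A 5 = sqrt (diag5_sq (a 3) (a 4) (a 5) k t)"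
  proof -
    have "diag A 5 = cmod (v1 - v4)"
      unfolding diag_def v1_def v4_def by (simp add: dist_norm norm_minus_commute six)
    then show ?thesis using norm_v1_minus_v4[OF config] by (metis norm_ge_zero real_sqrt_unique)
  qed
  show "energy q A = energy_param a q k t"
    unfolding energy_def energy_param_def diag1 diag2 diag3 k diag5 by simp
qed

lemma weakly_convex_pentagon_slice_conditions:
  assumes "has_sides a A" and "weakly_convex_ccw A \<or> weakly_convex_cw A" and "diag A 4 = k"
    and "k > 0" and "xdiag A 2 = t" and "tri_gram (a 5) k t > 0" and "tri_gram (a 1) (a 2) t > 0"
  shows "slice_conditions a k t" and "energy q A = energy_param a q k t"
proof -
  obtain B where "has_sides a B" "weakly_convex_ccw B" "diag B 4 = k" "xdiag B 2 = t"
    "energy q B = energy q A"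
  proof (cases "weakly_convex_ccw A")
    case True
    then show ?thesis using that assms by blast
  next
    case False
    then have "weakly_convex_ccw (cnj_pentagon A)"
      using assms(2) weakly_convex_ccw_cnj_pentagon by blast
    then show ?thesis
      using that[of "cnj_pentagon A"] assms
      by (simp add: has_sides_cnj_pentagon diag_cnj_pentagon xdiag_def energy_def)
  qed
  then show "slice_conditions a k t" and "energy q A = energy_param a q k t"
    using ccw_pentagon_slice_conditions assms(4,6,7) by metis+
qed

lemma has_sides_tri_gram_nonneg:
  assumes "has_sides a A"
  shows "tri_gram (a 5) (diag A 4) (xdiag A 2) \<ge> 0" and "tri_gram (a 1) (a 2) (xdiag A 2) \<ge> 0"
    and "diag A 4 = 0 \<Longrightarrow> xdiag A 2 = (a 5)\<^sup>2"
proof -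
  define v1 v2 v5 where "v1 = A $ 1 - A $ 3" and "v2 = A $ 2 - A $ 3" and "v5 = A $ 5 - A $ 3"
  have six: "(6::5) = 1" by simp
  have side: "cmod (A $ i - A $ (i + 1)) = a i" for i
    using assms unfolding has_sides_def dist_norm by blast
  have norm_v5: "cmod v5 = diag A 4" unfolding diag_def v5_def by (simp add: dist_norm norm_minus_commute)
  have norm_v1: "(cmod v1)\<^sup>2 = xdiag A 2" unfolding xdiag_def diag_def v1_def by (simp add: dist_norm)
  have norm_v2: "cmod v2 = a 2" using side[of 2] unfolding v2_def by simp
  have side1: "cmod (v2 - v1) = a 1" using side[of 1] unfolding v1_def v2_def by (simp add: norm_minus_commute)
  have side5: "cmod (v5 - v1) = a 5" using side[of 5] unfolding v1_def v5_def by (simp add: six)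
  show "tri_gram (a 5) (diag A 4) (xdiag A 2) \<ge> 0"
    using cnj_mult_tri(3)[OF norm_v5 norm_v1 side5] by (simp add: tri_gram_sym)
  show "tri_gram (a 1) (a 2) (xdiag A 2) \<ge> 0"
    using cnj_mult_tri(3)[OF norm_v2 norm_v1 side1] by (simp add: tri_gram_sym)
  assume "diag A 4 = 0"
  then have "v5 = 0" using norm_v5 by simp
  then show "xdiag A 2 = (a 5)\<^sup>2" using side5 norm_v1 by simp
qed

text \<open>tri_gram is a concave quadratic in t with leading coefficient -1, so it cannot vanish at an
interior point of a set on which it is nonnegative.\<close>

lemma tri_gram_pos_of_interior:
  assumes "t \<in> interior S" and "\<And>s. s \<in> S \<Longrightarrow> tri_gram x y s \<ge> 0"
  shows "tri_gram x y t > 0"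
proof (rule ccontr)
  assume "\<not> tri_gram x y t > 0"
  moreover have "t \<in> S" using assms(1) interior_subset by blast
  ultimately have zero: "tri_gram x y t = 0" using assms(2) by force
  obtain e where e: "e > 0" "ball t e \<subseteq> S" using assms(1) mem_interior by blast
  define l where "l = x\<^sup>2 + y\<^sup>2 - t"
  define h where "h = (if l \<ge> 0 then - e / 2 else e / 2)"
  have "t + h \<in> S" using e unfolding h_def by (auto simp: dist_real_def)
  have "tri_gram x y (t + h) = tri_gram x y t + 2 * l * h - h\<^sup>2"
    unfolding tri_gram_def tri_dot_def l_def by (simp add: algebra_simps power2_eq_square)
  also have "\<dots> < 0"
  proof -
    have "l * h \<le> 0" unfolding h_def using e by (auto simp: mult_nonneg_nonpos mult_nonpos_nonneg)
    moreover have "h\<^sup>2 > 0" unfolding h_def using e by auto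
    ultimately show ?thesis using zero by linarith
  qed
  finally show False using assms(2) \<open>t + h \<in> S\<close> by force
qed

lemma slice_param_interior_conditions:
  assumes "t \<in> slice_param_interior a k"
  shows "slice_conditions a k t" and "slice_energy a q k t = energy_param a q k t"
proof -
  define I where "I = (\<lambda>A. xdiag A 2) ` slice a k"
  have t: "t \<in> interior I" using assms unfolding I_def slice_param_interior_def .
  have slice: "has_sides a A \<and> (weakly_convex_ccw A \<or> weakly_convex_cw A) \<and> diag A 4 = k"
    if "A \<in> slice a k" for A
    using that MC_closure_weakly_convex unfolding slice_def by blast
  have gram: "tri_gram (a 5) k s \<ge> 0 \<and> tri_gram (a 1) (a 2) s \<ge> 0" if "s \<in> I" for s
    using that slice has_sides_tri_gram_nonneg(1,2) unfolding I_def by blast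
  have "k > 0"
  proof -
    obtain A where A: "A \<in> slice a k" using t interior_subset unfolding I_def by blast
    then have "k \<ge> 0" using slice unfolding diag_def by (metis zero_le_dist)
    moreover have "k \<noteq> 0"
    proof
      assume "k = 0"
      then have "I \<subseteq> {(a 5)\<^sup>2}"
        using slice has_sides_tri_gram_nonneg(3) unfolding I_def by blast
      then have "interior I = {}"
        using interior_mono[of I "{(a 5)\<^sup>2}"] by simp
      with t show False by simp
    qed
    ultimately show ?thesis by simp
  qed
  moreover have gram1: "tri_gram (a 5) k t > 0" and gram2: "tri_gram (a 1) (a 2) t > 0"
    using tri_gram_pos_of_interior[OF t] gram by blast+
  moreover have "\<exists>A. A \<in> slice a k \<and> xdiag A 2 = t"
    using t interior_subset unfolding I_def by blast
  then have A: "(SOME A. A \<in> slice a k \<and> xdiag A 2 = t) \<in> slice a k"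
    "xdiag (SOME A. A \<in> slice a k \<and> xdiag A 2 = t) 2 = t"
    by (metis (mono_tags, lifting) someI_ex)+
  note pentagon = weakly_convex_pentagon_slice_conditions[OF _ _ _ \<open>k > 0\<close> A(2) gram1 gram2]
  show "slice_conditions a k t"
    using pentagon(1) slice[OF A(1)] by blast
  show "slice_energy a q k t = energy_param a q k t"
    unfolding slice_energy_def using pentagon(2) slice[OF A(1)] by blast
qed

theorem lemma7:
  fixes a q :: "5 \<Rightarrow> real" and k :: real
  assumes "\<forall>i. a i > 0" and "\<forall>i. q i > 0"
  shows "\<exists>f1. \<forall>t \<in> slice_param_interior a k.
           (slice_energy a q k has_real_derivative f1 t) (at t)
         \<and> (\<exists>d > 0. (f1 has_real_derivative d) (at t))"
proof (intro exI[of _ "energy_param_slope a q k"] ballI conjI)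
  fix t assume t: "t \<in> slice_param_interior a k"
  note cond = slice_param_interior_conditions[OF t]
  have "open (slice_param_interior a k)" unfolding slice_param_interior_def by simp
  then show "(slice_energy a q k has_real_derivative energy_param_slope a q k t) (at t)"
    using has_field_derivative_transform_within_open[OF has_real_derivative_energy_param[OF cond(1)] _ t]
      slice_param_interior_conditions(2) by metis
  show "\<exists>d > 0. (energy_param_slope a q k has_real_derivative d) (at t)"
    using energy_param_slope_has_pos_deriv[OF cond(1) assms(2)] .
qed

end
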